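(* Let $\mathcal{U}\subset\mathbb{R}^n\times\mathbb{R}^p$ be open, let $\mathcal{D}\subset\mathcal{U}$ be nonempty, let $\Gamma:\mathcal{D}\times\mathbb{R}^m\rightrightarrows\mathbb{R}^q$ be such that $\Gamma(\xi,\cdot)$ is positively homogeneous for every $\xi\in\mathcal{D}$, let $\mathcal{A}:\mathcal{U}\to\mathbb{R}^{q\times m}$, and define $\varXi:\mathcal{D}\times\mathbb{R}^m\rightrightarrows\mathbb{R}^q$ by $\varXi(\xi,z):=\mathcal{A}(\xi)z+\Gamma(\xi,z)$. Let $\bar\xi\in\mathcal{D}$ and $\omega\in\mathbb{R}^n\times\mathbb{R}^p$, put $H:=\Gamma(\bar\xi,\cdot)$, $\mathcal{Z}:=\mathrm{bd}\,\mathbb{B}\cap\mathrm{dom}\,H$, $\mathcal{Z}_0:=\{z\in\mathcal{Z}\mid 0\in\mathcal{A}(\bar\xi)z+H(z)\}$ and $\varTheta:=\mathrm{cl}\big(\mathrm{cone}\big(\bigcup_{z\in\mathcal{Z}}H(z)\big)\big)$, and assume: (i) $\bar\xi$ is $\varXi$-singular; (ii) $\Gamma$ is outer semicontinuous; (iii) $\mathcal{A}$ is semidifferentiable at $\bar\xi$ for $\omega$; (iv) the set $\mathcal{A}(\bar\xi)\,\mathrm{dom}\,H$ is closed; (v) there exists $c\ge0$ such that for every $z\in\mathcal{Z}_0$ there are $\varepsilon,\delta>0$ with $\Gamma(\xi,z')\cap\delta\mathbb{B}\subset\Gamma(\bar\xi,z')+c\|\xi-\bar\xi\|\mathbb{B}$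 whenever $(\xi,z')\in(\mathcal{D}\times\mathrm{bd}\,\mathbb{B})\cap((\bar\xi,z)+\varepsilon\mathbb{B})$; (vi) $\big(\mathcal{A}(\bar\xi)\,\mathrm{dom}\,H\big)\cap(-\varTheta)\subset\{0\}$. Then, with $c\ge0$ from (v), \[ d\ell_\varXi(\bar\xi)(\omega)+c\|\omega\|\ \ge\ \min_{z\in\mathcal{Z}_0}\mathrm{dist}\big[0,\ \mathcal{A}'(\bar\xi;\omega)z+\varTheta+\mathcal{A}(\bar\xi)\,\mathrm{dom}\,H\big]. \]
   Context: $\|\cdot\|$ is the Euclidean norm, $\mathbb{B}$ the closed unit ball, $\mathrm{bd}$ the boundary, $\mathrm{cl}$ the closure, $\mathrm{dist}[\xi,Z]$ the distance (with $\mathrm{dist}[\xi,\emptyset]=\infty$), and $\mathrm{cone}(Z):=\bigcup_{\gamma\ge0}\gamma Z$. A set-valued map $H$ is positively homogeneous if $H(\gamma z)=\gamma H(z)$ for all $\gamma>0$ and all $z$. $\Gamma$ is outer semicontinuous if $\limsup_{(\xi',z')\to(\xi,z),\,(\xi',z')\in\mathcal{D}\times\mathbb{R}^m}\Gamma(\xi',z')\subset\Gamma(\xi,z)$ (Painlevé–Kuratowski outer limit) for all $(\xi,z)\in\mathcal{D}\times\mathbb{R}^m$. The least singular value (LSV) function of $\varXi$ is $\ell_\varXi:\mathbb{R}^n\times\mathbb{R}^p\to[0,\infty]$, $\ell_\varXi(\xi):=\infty$ if $\xi\notin\mathcal{D}$ and $\ell_\varXi(\xi):=\inf_{\|z\|=1}\mathrm{dist}[0,\varXi(\xi,z)]$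 if $\xi\in\mathcal{D}$. A point $\bar\xi\in\mathcal{D}$ is $\varXi$-singular if $0\in\varXi(\bar\xi,z)$ for some $z\neq0$. The semiderivative of a single-valued map $\mathcal{A}$ at $\xi\in\mathrm{int}(\mathrm{dom}\,\mathcal{A})$ for $\omega$ is $\mathcal{A}'(\xi;\omega):=\lim_{\tau\searrow0,\omega'\to\omega}(\mathcal{A}(\xi+\tau\omega')-\mathcal{A}(\xi))/\tau$; $\mathcal{A}$ is semidifferentiable at $\xi$ for $\omega$ if this limit exists. The subderivative of $\varphi:\mathbb{R}^N\to\mathbb{R}\cup\{\infty\}$ at $\xi\in\mathrm{dom}\,\varphi$ in direction $\omega$ is $d\varphi(\xi)(\omega):=\liminf_{\tau\searrow0,\omega'\to\omega}(\varphi(\xi+\tau\omega')-\varphi(\xi))/\tau$. *)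

theory Defs
  imports "HOL-Analysis.Analysis" "HOL-Library.Liminf_Limsup"
begin

definition set_dist :: "'a::metric_space \<Rightarrow> 'a set \<Rightarrow> ereal" where
  "set_dist x Z = (if Z = {} then \<infinity> else ereal (infdist x Z))"

definition cone_of :: "'a::real_vector set \<Rightarrow> 'a set" where
  "cone_of Z = (\<Union>\<gamma>\<in>{0..}. (\<lambda>x. \<gamma> *\<^sub>R x) ` Z)"

definition sv_dom :: "('a \<Rightarrow> 'b set) \<Rightarrow> 'a set" where
  "sv_dom H = {z. H z \<noteq> {}}"

definition pos_homogeneous :: "('a::real_vector \<Rightarrow> 'b::real_vector set) \<Rightarrow> bool" where
  "pos_homogeneous H \<longleftrightarrow> (\<forall>\<gamma>>0. \<forall>z. H (\<gamma> *\<^sub>R z) = (\<lambda>y. \<gamma> *\<^sub>R y) ` H z)"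

definition outer_semicontinuous_on ::
  "'x::metric_space set \<Rightarrow> ('x \<Rightarrow> 'z::metric_space \<Rightarrow> 'y::metric_space set) \<Rightarrow> bool" where
  "outer_semicontinuous_on D \<Gamma> \<longleftrightarrow>
     (\<forall>\<xi>\<in>D. \<forall>z y. (\<exists>\<xi>s zs ys. (\<forall>k. \<xi>s k \<in> D \<and> ys k \<in> \<Gamma> (\<xi>s k) (zs k)) \<and>
          \<xi>s \<longlonglongrightarrow> \<xi> \<and> zs \<longlonglongrightarrow> z \<and> ys \<longlonglongrightarrow> y) \<longrightarrow> y \<in> \<Gamma> \<xi> z)"

definition Xi_map ::
  "('x \<Rightarrow> real^'m^'q) \<Rightarrow> ('x \<Rightarrow> real^'m \<Rightarrow> (real^'q) set) \<Rightarrow> 'x \<Rightarrow> real^'m \<Rightarrow> (real^'q) set" where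
  "Xi_map A \<Gamma> \<xi> z = (\<lambda>y. A \<xi> *v z + y) ` \<Gamma> \<xi> z"

definition lsv ::
  "'x set \<Rightarrow> ('x \<Rightarrow> real^'m \<Rightarrow> (real^'q) set) \<Rightarrow> 'x \<Rightarrow> ereal" where
  "lsv D \<Xi> \<xi> = (if \<xi> \<notin> D then \<infinity> else (INF z\<in>sphere 0 1. set_dist 0 (\<Xi> \<xi> z)))"

definition singular_point ::
  "'x set \<Rightarrow> ('x \<Rightarrow> real^'m \<Rightarrow> (real^'q) set) \<Rightarrow> 'x \<Rightarrow> bool" where
  "singular_point D \<Xi> \<xi> \<longleftrightarrow> \<xi> \<in> D \<and> (\<exists>z. z \<noteq> 0 \<and> 0 \<in> \<Xi> \<xi> z)"

definition semi_filter :: "'x::real_normed_vector \<Rightarrow> (real \<times> 'x) filter" where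
  "semi_filter \<omega> = at (0, \<omega>) within ({0<..} \<times> UNIV)"

definition semidifferentiable_at ::
  "('x::real_normed_vector \<Rightarrow> 'v::real_normed_vector) \<Rightarrow> 'x \<Rightarrow> 'x \<Rightarrow> bool" where
  "semidifferentiable_at A \<xi> \<omega> \<longleftrightarrow>
     (\<exists>L. ((\<lambda>(\<tau>, \<omega>'). (1 / \<tau>) *\<^sub>R (A (\<xi> + \<tau> *\<^sub>R \<omega>') - A \<xi>)) \<longlongrightarrow> L) (semi_filter \<omega>))"

definition semiderivative ::
  "('x::real_normed_vector \<Rightarrow> 'v::real_normed_vector) \<Rightarrow> 'x \<Rightarrow> 'x \<Rightarrow> 'v" where
  "semiderivative A \<xi> \<omega> =
     (THE L. ((\<lambda>(\<tau>, \<omega>'). (1 / \<tau>) *\<^sub>R (A (\<xi> + \<tau> *\<^sub>R \<omega>') - A \<xi>)) \<longlongrightarrow> L) (semi_filter \<omega>))"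

definition subderivative ::
  "('x::real_normed_vector \<Rightarrow> ereal) \<Rightarrow> 'x \<Rightarrow> 'x \<Rightarrow> ereal" where
  "subderivative \<phi> \<xi> \<omega> =
     Liminf (semi_filter \<omega>) (\<lambda>(\<tau>, \<omega>'). (\<phi> (\<xi> + \<tau> *\<^sub>R \<omega>') - \<phi> \<xi>) / ereal \<tau>)"

end

theory Submission
  imports Defs
begin

text \<open>
  Since \<xi>bar is singular, lsv vanishes there, so the subderivative is a liminf of
  lsv(\<xi>bar + \<tau>\<omega>')/\<tau>. Along a sequence realising a value y of this liminf there are unit
  vectors z_k and y_k \<in> \<Gamma>(\<xi>_k, z_k) with |A(\<xi>_k) z_k + y_k| \<le> (y + o(1)) \<tau>_k. A limit point
  zbar of the z_k lies in Z0 by outer semicontinuity, and (vi) forces A(\<xi>bar) zbar = 0, so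
  y_k \<rightarrow> 0. Then (v) moves y_k to some h_k \<in> H(z_k) at cost c \<tau>_k |\<omega>_k|. By positive
  homogeneity (h_k + A(\<xi>bar) z_k)/\<tau>_k lies in \<Theta> + A(\<xi>bar) dom H, and writing
  A(\<xi>_k) = A(\<xi>bar) + \<tau>_k N_k with N_k \<rightarrow> A'(\<xi>bar; \<omega>) shows that its distance to
  -A'(\<xi>bar; \<omega>) zbar is at most y + c |\<omega>| + o(1). Finally Z0 is compact, so the distance
  attains its minimum on Z0.
\<close>

lemma norm_matrix_vector_mult_le:
  fixes M :: "real^'m^'q"
  shows "norm (M *v x) \<le> norm M * norm x * real CARD('q)"
proof -
  have "norm (M *v x) \<le> (\<Sum>i\<in>UNIV. \<bar>(M *v x) $ i\<bar>)"
    by (rule norm_le_l1_cart)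
  also have "\<dots> \<le> (\<Sum>i::'q\<in>UNIV. norm M * norm x)"
  proof (rule sum_mono)
    fix i
    have "\<bar>(M *v x) $ i\<bar> \<le> norm (M $ i) * norm x"
      by (simp add: matrix_mult_dot Cauchy_Schwarz_ineq2)
    also have "\<dots> \<le> norm M * norm x"
      by (intro mult_right_mono) (auto simp: Finite_Cartesian_Product.norm_nth_le)
    finally show "\<bar>(M *v x) $ i\<bar> \<le> norm M * norm x" .
  qed
  finally show ?thesis
    by (simp add: mult.commute)
qed

lemma bounded_bilinear_matrix_vector_mult: "bounded_bilinear (\<lambda>(M::real^'m^'q) x. M *v x)"
proof (rule bounded_bilinear.intro)
  show "\<exists>K. \<forall>M x. norm ((M::real^'m^'q) *v x) \<le> norm M * norm x * K"
    using norm_matrix_vector_mult_le by blast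
qed (simp_all add: algebra_simps scaleR_matrix_vector_assoc)

lemma tendsto_matrix_vector_mult [tendsto_intros]:
  fixes M :: "'a \<Rightarrow> real^'m^'q"
  assumes "(M \<longlongrightarrow> M0) F" "(x \<longlongrightarrow> x0) F"
  shows "((\<lambda>k. M k *v x k) \<longlongrightarrow> M0 *v x0) F"
  using bounded_bilinear.tendsto[OF bounded_bilinear_matrix_vector_mult assms] by simp

lemma infdist_translation:
  fixes a :: "'a::real_normed_vector"
  shows "infdist x ((+) a ` T) = infdist (x - a) T"
proof (cases "T = {}")
  case False
  have "dist x (a + t) = dist (x - a) t" for t
    by (simp add: dist_norm algebra_simps)
  with False show ?thesis
    by (simp add: infdist_notempty image_comp o_def)
qed (simp add: infdist_def)

section \<open>Sequential lower bounds for subderivatives\<close>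

lemma ereal_le_Liminf_at_within_sequentially:
  fixes Q :: "'a::first_countable_topology \<Rightarrow> ereal"
  assumes "\<And>f y. (\<And>k. f k \<in> S - {a}) \<Longrightarrow> f \<longlonglongrightarrow> a \<Longrightarrow> (\<And>k. Q (f k) \<le> ereal y) \<Longrightarrow> b \<le> y"
  shows "ereal b \<le> Liminf (at a within S) Q"
proof -
  have eventually_gt: "eventually (\<lambda>x. ereal r < Q x) (at a within S)" if "r < b" for r
  proof (rule ccontr)
    obtain U :: "nat \<Rightarrow> 'a set" where U: "\<And>k. open (U k)" "\<And>k. a \<in> U k"
      "\<And>f. \<forall>k. f k \<in> U k \<Longrightarrow> f \<longlonglongrightarrow> a"
      by (rule first_countable_topology_class.countable_basis) blast
    assume "\<not> eventually (\<lambda>x. ereal r < Q x) (at a within S)"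
    then have "\<not> (\<forall>x\<in>U k. x \<noteq> a \<longrightarrow> x \<in> S \<longrightarrow> ereal r < Q x)" for k
      using U(1,2) unfolding eventually_at_topological by blast
    then have "\<forall>k. \<exists>x. x \<in> S - {a} \<and> x \<in> U k \<and> Q x \<le> ereal r"
      by (auto simp: not_less)
    then obtain f where "\<forall>k. f k \<in> S - {a} \<and> f k \<in> U k \<and> Q (f k) \<le> ereal r"
      by metis
    then have "b \<le> r"
      using assms U(3) by blast
    with that show False
      by simp
  qed
  show ?thesis
    unfolding le_Liminf_iff
  proof (intro allI impI)
    fix y assume "y < ereal b"
    then obtain r where "y < ereal r" "r < b"
      using ereal_dense2 by fastforce
    show "eventually (\<lambda>x. y < Q x) (at a within S)"
      using eventually_gt[OF \<open>r < b\<close>] by (rule eventually_mono) (use \<open>y < ereal r\<close> in auto)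
  qed
qed

lemma filterlim_semi_filter_sequentially:
  assumes "\<And>k. \<tau>s k > 0" "\<tau>s \<longlonglongrightarrow> 0" "\<omega>s \<longlonglongrightarrow> \<omega>"
  shows "filterlim (\<lambda>k. (\<tau>s k, \<omega>s k)) (semi_filter \<omega>) sequentially"
  unfolding semi_filter_def filterlim_at
proof
  show "\<forall>\<^sub>F k in sequentially. (\<tau>s k, \<omega>s k) \<in> {0<..} \<times> UNIV \<and> (\<tau>s k, \<omega>s k) \<noteq> (0, \<omega>)"
    using assms(1) by (simp add: order_less_imp_not_eq2)
  show "(\<lambda>k. (\<tau>s k, \<omega>s k)) \<longlonglongrightarrow> (0, \<omega>)"
    using assms(2,3) by (rule tendsto_Pair)
qed

lemma semi_filter_not_bot: "semi_filter \<omega> \<noteq> bot"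
proof
  assume "semi_filter \<omega> = bot"
  moreover have "filterlim (\<lambda>k. (1 / Suc k, \<omega>)) (semi_filter \<omega>) sequentially"
    by (intro filterlim_semi_filter_sequentially LIMSEQ_Suc[OF lim_inverse_n'] tendsto_const) simp
  ultimately show False
    by (simp add: filterlim_def bot_unique filtermap_bot_iff)
qed

lemma semiderivative_tendsto:
  assumes "semidifferentiable_at A \<xi> \<omega>"
  shows "((\<lambda>(\<tau>, \<omega>'). (1 / \<tau>) *\<^sub>R (A (\<xi> + \<tau> *\<^sub>R \<omega>') - A \<xi>)) \<longlongrightarrow> semiderivative A \<xi> \<omega>)
           (semi_filter \<omega>)"
proof -
  obtain L where L: "((\<lambda>(\<tau>, \<omega>'). (1 / \<tau>) *\<^sub>R (A (\<xi> + \<tau> *\<^sub>R \<omega>') - A \<xi>)) \<longlongrightarrow> L) (semi_filter \<omega>)"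
    using assms unfolding semidifferentiable_at_def by blast
  then have "semiderivative A \<xi> \<omega> = L"
    unfolding semiderivative_def
  proof (rule the_equality)
    fix L' assume "((\<lambda>(\<tau>, \<omega>'). (1 / \<tau>) *\<^sub>R (A (\<xi> + \<tau> *\<^sub>R \<omega>') - A \<xi>)) \<longlongrightarrow> L') (semi_filter \<omega>)"
    then show "L' = L"
      using L by (rule tendsto_unique[OF semi_filter_not_bot])
  qed
  with L show ?thesis
    by simp
qed

lemma semiderivative_sequentially:
  assumes "semidifferentiable_at A \<xi> \<omega>" "\<And>k. \<tau>s k > 0" "\<tau>s \<longlonglongrightarrow> 0" "\<omega>s \<longlonglongrightarrow> \<omega>"
  shows "(\<lambda>k. (1 / \<tau>s k) *\<^sub>R (A (\<xi> + \<tau>s k *\<^sub>R \<omega>s k) - A \<xi>)) \<longlonglongrightarrow> semiderivative A \<xi> \<omega>"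
  using filterlim_compose[OF semiderivative_tendsto[OF assms(1)]
      filterlim_semi_filter_sequentially[OF assms(2-4)]]
  by simp

lemma subderivative_ge_sequentially:
  assumes "\<And>\<tau>s \<omega>s y. (\<And>k. \<tau>s k > 0) \<Longrightarrow> \<tau>s \<longlonglongrightarrow> 0 \<Longrightarrow> \<omega>s \<longlonglongrightarrow> \<omega> \<Longrightarrow>
             (\<And>k. (\<phi> (\<xi> + \<tau>s k *\<^sub>R \<omega>s k) - \<phi> \<xi>) / ereal (\<tau>s k) \<le> ereal y) \<Longrightarrow> b \<le> y"
  shows "ereal b \<le> subderivative \<phi> \<xi> \<omega>"
  unfolding subderivative_def semi_filter_def
proof (rule ereal_le_Liminf_at_within_sequentially)
  fix f :: "nat \<Rightarrow> real \<times> 'a" and y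
  assume f: "\<And>k. f k \<in> {0<..} \<times> UNIV - {(0, \<omega>)}" and lim: "f \<longlonglongrightarrow> (0, \<omega>)"
    and le: "\<And>k. (case f k of (\<tau>, \<omega>') \<Rightarrow> (\<phi> (\<xi> + \<tau> *\<^sub>R \<omega>') - \<phi> \<xi>) / ereal \<tau>) \<le> ereal y"
  show "b \<le> y"
  proof (rule assms)
    show "fst (f k) > 0" for k
      using f[of k] by (auto simp: mem_Times_iff)
    show "(\<lambda>k. fst (f k)) \<longlonglongrightarrow> 0" "(\<lambda>k. snd (f k)) \<longlonglongrightarrow> \<omega>"
      using tendsto_fst[OF lim] tendsto_snd[OF lim] by simp_all
    show "(\<phi> (\<xi> + fst (f k) *\<^sub>R snd (f k)) - \<phi> \<xi>) / ereal (fst (f k)) \<le> ereal y" for k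
      using le[of k] by (simp add: split_beta)
  qed
qed

section \<open>Singular directions and the distance estimate\<close>

text \<open>
  In the notation of the statement, singular_directions A \<Gamma> \<xi>bar is Z0, range_cone H is \<Theta>
  and cone_plus_image (A \<xi>bar) H is \<Theta> + A(\<xi>bar) dom H.
\<close>

definition singular_directions ::
  "('x \<Rightarrow> real^'m^'q) \<Rightarrow> ('x \<Rightarrow> real^'m \<Rightarrow> (real^'q) set) \<Rightarrow> 'x \<Rightarrow> (real^'m) set" where
  "singular_directions A \<Gamma> \<xi> = {z \<in> sphere 0 1 \<inter> sv_dom (\<Gamma> \<xi>). 0 \<in> Xi_map A \<Gamma> \<xi> z}"

definition range_cone :: "('a::real_normed_vector \<Rightarrow> 'b::real_normed_vector set) \<Rightarrow> 'b set" where
  "range_cone H = closure (cone_of (\<Union>z\<in>sphere 0 1 \<inter> sv_dom H. H z))"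

definition cone_plus_image :: "real^'m^'q \<Rightarrow> (real^'m \<Rightarrow> (real^'q) set) \<Rightarrow> (real^'q) set" where
  "cone_plus_image M H = {t + M *v w | t w. t \<in> range_cone H \<and> w \<in> sv_dom H}"

lemma zero_in_Xi_map_iff: "0 \<in> Xi_map A \<Gamma> \<xi> z \<longleftrightarrow> - (A \<xi> *v z) \<in> \<Gamma> \<xi> z"
  unfolding Xi_map_def by (auto simp: image_iff add_eq_0_iff2 intro: bexI[of _ "- (A \<xi> *v z)"])

lemma singular_directions_eq:
  "singular_directions A \<Gamma> \<xi> = {z \<in> sphere 0 1. - (A \<xi> *v z) \<in> \<Gamma> \<xi> z}"
  by (auto simp: singular_directions_def zero_in_Xi_map_iff sv_dom_def)

lemma singular_directions_nonempty:
  assumes "pos_homogeneous (\<Gamma> \<xi>)" "singular_point D (Xi_map A \<Gamma>) \<xi>"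
  shows "singular_directions A \<Gamma> \<xi> \<noteq> {}"
proof -
  obtain z where "z \<noteq> 0" and z: "- (A \<xi> *v z) \<in> \<Gamma> \<xi> z"
    using assms(2) by (auto simp: singular_point_def zero_in_Xi_map_iff)
  define u where "u = (1 / norm z) *\<^sub>R z"
  have "\<Gamma> \<xi> u = (\<lambda>y. (1 / norm z) *\<^sub>R y) ` \<Gamma> \<xi> z"
    using assms(1) \<open>z \<noteq> 0\<close> by (simp add: pos_homogeneous_def u_def)
  then have "- (A \<xi> *v u) \<in> \<Gamma> \<xi> u"
    using z by (metis image_eqI matrix_vector_mult_scaleR scaleR_minus_right u_def)
  moreover have "u \<in> sphere 0 1"
    using \<open>z \<noteq> 0\<close> by (simp add: u_def)
  ultimately show ?thesis
    by (auto simp: singular_directions_eq)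
qed

lemma outer_semicontinuous_onD:
  assumes "outer_semicontinuous_on D \<Gamma>" "\<xi> \<in> D"
    and "\<And>k. \<xi>s k \<in> D" "\<And>k. ys k \<in> \<Gamma> (\<xi>s k) (zs k)"
    and "\<xi>s \<longlonglongrightarrow> \<xi>" "zs \<longlonglongrightarrow> z" "ys \<longlonglongrightarrow> y"
  shows "y \<in> \<Gamma> \<xi> z"
  using assms unfolding outer_semicontinuous_on_def by blast

lemma compact_singular_directions:
  assumes "outer_semicontinuous_on D \<Gamma>" "\<xi> \<in> D"
  shows "compact (singular_directions A \<Gamma> \<xi>)"
proof -
  have "closed (singular_directions A \<Gamma> \<xi>)"
    unfolding closed_sequential_limits
  proof (intro allI impI, elim conjE)
    fix zs z
    assume zs: "\<forall>k. zs k \<in> singular_directions A \<Gamma> \<xi>" and "zs \<longlonglongrightarrow> z"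
    have "z \<in> sphere 0 1"
      by (rule closed_sequentially[OF closed_sphere _ \<open>zs \<longlonglongrightarrow> z\<close>])
        (use zs in \<open>simp add: singular_directions_eq\<close>)
    moreover have "- (A \<xi> *v z) \<in> \<Gamma> \<xi> z"
      using zs by (intro outer_semicontinuous_onD[OF assms _ _ tendsto_const \<open>zs \<longlonglongrightarrow> z\<close>])
        (use assms(2) in \<open>auto simp: singular_directions_eq intro!: tendsto_intros \<open>zs \<longlonglongrightarrow> z\<close>\<close>)
    ultimately show "z \<in> singular_directions A \<Gamma> \<xi>"
      by (simp add: singular_directions_eq)
  qed
  moreover have "bounded (singular_directions A \<Gamma> \<xi>)"
    by (rule bounded_subset[OF bounded_sphere[of 0 1]]) (auto simp: singular_directions_eq)
  ultimately show ?thesis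
    by (simp add: compact_eq_bounded_closed)
qed

lemma lsv_eq_0I:
  assumes "\<xi> \<in> D" "z \<in> sphere 0 1" "0 \<in> \<Xi> \<xi> z"
  shows "lsv D \<Xi> \<xi> = 0"
proof -
  have "set_dist 0 (\<Xi> \<xi> z) = 0"
    using assms(3) by (auto simp: set_dist_def zero_ereal_def)
  then have "(INF z\<in>sphere 0 1. set_dist 0 (\<Xi> \<xi> z)) \<le> 0"
    using assms(2) by (metis INF_lower)
  moreover have "0 \<le> (INF z\<in>sphere 0 1. set_dist 0 (\<Xi> \<xi> z))"
    by (rule INF_greatest) (auto simp: set_dist_def infdist_nonneg)
  ultimately show ?thesis
    using assms(1) by (simp add: lsv_def)
qed

lemma lsv_lessE:
  assumes "lsv D \<Xi> \<xi> < ereal r"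
  obtains z p where "\<xi> \<in> D" "z \<in> sphere 0 1" "p \<in> \<Xi> \<xi> z" "norm p < r"
proof -
  have "\<xi> \<in> D"
    using assms by (auto simp: lsv_def split: if_splits)
  then have "(INF z\<in>sphere 0 1. set_dist 0 (\<Xi> \<xi> z)) < ereal r"
    using assms by (simp add: lsv_def)
  then obtain z where z: "z \<in> sphere 0 1" and "set_dist 0 (\<Xi> \<xi> z) < ereal r"
    unfolding INF_less_iff by blast
  then have ne: "\<Xi> \<xi> z \<noteq> {}" and "(INF p\<in>\<Xi> \<xi> z. dist 0 p) < r"
    by (auto simp: set_dist_def infdist_notempty split: if_splits)
  moreover have "bdd_below (dist 0 ` \<Xi> \<xi> z)"
    by (rule bdd_belowI[of _ 0]) auto
  ultimately obtain p where "p \<in> \<Xi> \<xi> z" "dist 0 p < r"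
    by (auto simp: cINF_less_iff)
  with \<open>\<xi> \<in> D\<close> z that show ?thesis
    by simp
qed

lemma scaled_value_in_range_cone:
  assumes "h \<in> H z" "z \<in> sphere 0 1" "r \<ge> 0"
  shows "r *\<^sub>R h \<in> range_cone H"
proof -
  have "h \<in> (\<Union>z\<in>sphere 0 1 \<inter> sv_dom H. H z)"
    using assms(1,2) by (auto simp: sv_dom_def)
  then show ?thesis
    using assms(3) closure_subset unfolding range_cone_def cone_of_def by fast
qed

lemma singular_direction_in_kernel:
  assumes "(\<lambda>w. M *v w) ` sv_dom H \<inter> uminus ` range_cone H \<subseteq> {0}"
    and "z \<in> sphere 0 1" "- (M *v z) \<in> H z"
  shows "M *v z = 0"
proof -
  have "M *v z \<in> (\<lambda>w. M *v w) ` sv_dom H"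
    using assms(3) by (auto simp: sv_dom_def)
  moreover have "- (M *v z) \<in> range_cone H"
    using scaled_value_in_range_cone[of "- (M *v z)" H z 1] assms(2,3) by simp
  then have "M *v z \<in> uminus ` range_cone H"
    by (metis image_eqI minus_minus)
  ultimately show ?thesis
    using assms(1) by blast
qed

lemma cone_plus_image_nonempty:
  assumes "z \<in> sphere 0 1" "H z \<noteq> {}"
  shows "cone_plus_image M H \<noteq> {}"
proof -
  obtain h where "h \<in> H z"
    using assms(2) by blast
  then have "0 \<in> range_cone H"
    using scaled_value_in_range_cone[of h H z 0] assms(1) by simp
  moreover have "z \<in> sv_dom H"
    using assms(2) by (simp add: sv_dom_def)
  ultimately have "0 + M *v z \<in> cone_plus_image M H"
    unfolding cone_plus_image_def by blast
  then show ?thesis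
    by blast
qed

lemma set_dist_translated_cone_plus_image:
  assumes "cone_plus_image M H \<noteq> {}"
  shows "set_dist 0 {v + t + M *v w | t w. t \<in> range_cone H \<and> w \<in> sv_dom H}
           = ereal (infdist (- v) (cone_plus_image M H))"
proof -
  have "{v + t + M *v w | t w. t \<in> range_cone H \<and> w \<in> sv_dom H} = (+) v ` cone_plus_image M H"
    unfolding cone_plus_image_def by (auto simp: add.assoc)
  with assms show ?thesis
    by (simp add: set_dist_def infdist_translation)
qed

lemma scaled_point_in_cone_plus_image:
  assumes "pos_homogeneous H" "z \<in> sphere 0 1" "h \<in> H z" "\<tau> > 0"
  shows "(1 / \<tau>) *\<^sub>R (h + M *v z) \<in> cone_plus_image M H"
proof -
  have "(1 / \<tau>) *\<^sub>R h \<in> range_cone H"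
    using assms(2-4) by (intro scaled_value_in_range_cone) auto
  moreover have "(1 / \<tau>) *\<^sub>R z \<in> sv_dom H"
    using assms(1,3,4) by (force simp: pos_homogeneous_def sv_dom_def)
  moreover have "(1 / \<tau>) *\<^sub>R (h + M *v z) = (1 / \<tau>) *\<^sub>R h + M *v ((1 / \<tau>) *\<^sub>R z)"
    by (simp add: algebra_simps)
  ultimately show ?thesis
    unfolding cone_plus_image_def by blast
qed

lemma infdist_cone_plus_image_le:
  assumes "pos_homogeneous H" "z \<in> sphere 0 1" "h \<in> H z" "\<tau> > 0"
  shows "\<tau> * infdist (- v) (cone_plus_image M H)
           \<le> norm ((M + \<tau> *\<^sub>R N) *v z + y) + \<tau> * norm (v - N *v z) + norm (y - h)"
proof -
  define p where "p = (1 / \<tau>) *\<^sub>R (h + M *v z)"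
  have "infdist (- v) (cone_plus_image M H) \<le> norm (v + p)"
    using infdist_le[OF scaled_point_in_cone_plus_image[OF assms], of "- v"]
    by (simp add: p_def dist_norm norm_minus_commute[of "- v"] add.commute)
  then have "\<tau> * infdist (- v) (cone_plus_image M H) \<le> \<tau> * norm (v + p)"
    using assms(4) by (simp add: mult_left_mono)
  also have "\<dots> = norm (\<tau> *\<^sub>R (v + p))"
    using assms(4) by simp
  also have "\<tau> *\<^sub>R (v + p) = ((M + \<tau> *\<^sub>R N) *v z + y) + \<tau> *\<^sub>R (v - N *v z) - (y - h)"
    using assms(4) by (simp add: p_def algebra_simps flip: scaleR_matrix_vector_assoc)
  also have "norm \<dots> \<le> norm ((M + \<tau> *\<^sub>R N) *v z + y) + \<tau> * norm (v - N *v z) + norm (y - h)"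
    using assms(4) norm_triangle_ineq4[of "(M + \<tau> *\<^sub>R N) *v z + y + \<tau> *\<^sub>R (v - N *v z)" "y - h"]
      norm_triangle_ineq[of "(M + \<tau> *\<^sub>R N) *v z + y" "\<tau> *\<^sub>R (v - N *v z)"]
    by simp
  finally show ?thesis .
qed

lemma infdist_cone_plus_image_limit_le:
  assumes hom: "pos_homogeneous H"
    and \<tau>s: "\<And>k. \<tau>s k > 0"
    and zs: "\<And>k. zs k \<in> sphere 0 1" "zs \<longlonglongrightarrow> z"
    and lim: "Ns \<longlonglongrightarrow> L" "es \<longlonglongrightarrow> 0" "rs \<longlonglongrightarrow> r"
    and small: "\<And>k. norm ((M + \<tau>s k *\<^sub>R Ns k) *v zs k + ys k) \<le> (y + es k) * \<tau>s k"
    and near: "eventually (\<lambda>k. \<exists>h\<in>H (zs k). norm (ys k - h) \<le> \<tau>s k * rs k) sequentially"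
  shows "infdist (- (L *v z)) (cone_plus_image M H) \<le> y + r"
proof (rule tendsto_lowerbound)
  have "(\<lambda>k. y + es k + norm (L *v z - Ns k *v zs k) + rs k) \<longlonglongrightarrow> y + 0 + norm (L *v z - L *v z) + r"
    by (intro tendsto_intros zs lim)
  then show "(\<lambda>k. y + es k + norm (L *v z - Ns k *v zs k) + rs k) \<longlonglongrightarrow> y + r"
    by simp
  show "eventually (\<lambda>k. infdist (- (L *v z)) (cone_plus_image M H)
                          \<le> y + es k + norm (L *v z - Ns k *v zs k) + rs k) sequentially"
    using near
  proof (rule eventually_mono)
    fix k
    assume "\<exists>h\<in>H (zs k). norm (ys k - h) \<le> \<tau>s k * rs k"
    then obtain h where h: "h \<in> H (zs k)" "norm (ys k - h) \<le> \<tau>s k * rs k"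
      by blast
    have "\<tau>s k * infdist (- (L *v z)) (cone_plus_image M H)
          \<le> norm ((M + \<tau>s k *\<^sub>R Ns k) *v zs k + ys k) + \<tau>s k * norm (L *v z - Ns k *v zs k)
             + norm (ys k - h)"
      by (rule infdist_cone_plus_image_le[OF hom zs(1) h(1) \<tau>s])
    also have "\<dots> \<le> \<tau>s k * (y + es k + norm (L *v z - Ns k *v zs k) + rs k)"
      using small[of k] h(2) by (simp add: algebra_simps)
    finally show "infdist (- (L *v z)) (cone_plus_image M H) \<le> y + es k + norm (L *v z - Ns k *v zs k) + rs k"
      using \<tau>s[of k] by simp
  qed
qed simp

lemma limit_of_near_singular_directions:
  assumes osc: "outer_semicontinuous_on D \<Gamma>" and "\<xi> \<in> D"
    and vi: "(\<lambda>w. A \<xi> *v w) ` sv_dom (\<Gamma> \<xi>) \<inter> uminus ` range_cone (\<Gamma> \<xi>) \<subseteq> {0}"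
    and \<xi>s: "\<And>k. \<xi>s k \<in> D" "\<xi>s \<longlonglongrightarrow> \<xi>" "(\<lambda>k. A (\<xi>s k)) \<longlonglongrightarrow> A \<xi>"
    and zs: "\<And>k. zs k \<in> sphere 0 1" "zs \<longlonglongrightarrow> z"
    and ys: "\<And>k. ys k \<in> \<Gamma> (\<xi>s k) (zs k)" "(\<lambda>k. A (\<xi>s k) *v zs k + ys k) \<longlonglongrightarrow> 0"
  shows "z \<in> singular_directions A \<Gamma> \<xi>" "ys \<longlonglongrightarrow> 0"
proof -
  have ys_lim: "ys \<longlonglongrightarrow> - (A \<xi> *v z)"
    using tendsto_diff[OF ys(2) tendsto_matrix_vector_mult[OF \<xi>s(3) zs(2)]] by simp
  have "z \<in> sphere 0 1"
    by (rule closed_sequentially[OF closed_sphere zs])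
  moreover have "- (A \<xi> *v z) \<in> \<Gamma> \<xi> z"
    by (rule outer_semicontinuous_onD[OF osc \<open>\<xi> \<in> D\<close> \<xi>s(1) ys(1) \<xi>s(2) zs(2) ys_lim])
  ultimately show "z \<in> singular_directions A \<Gamma> \<xi>"
    by (simp add: singular_directions_eq)
  have "A \<xi> *v z = 0"
    by (rule singular_direction_in_kernel[OF vi \<open>z \<in> sphere 0 1\<close> \<open>- (A \<xi> *v z) \<in> \<Gamma> \<xi> z\<close>])
  with ys_lim show "ys \<longlonglongrightarrow> 0"
    by simp
qed

lemma eventually_close_to_base_values:
  assumes stable: "\<exists>\<epsilon>>0. \<exists>\<delta>>0. \<forall>\<xi>' z'. \<xi>' \<in> D \<and> z' \<in> sphere 0 1 \<and> dist (\<xi>', z') (\<xi>, z) \<le> \<epsilon> \<longrightarrow>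
              \<Gamma> \<xi>' z' \<inter> cball 0 \<delta> \<subseteq> (\<Union>h\<in>\<Gamma> \<xi> z'. cball h (c * norm (\<xi>' - \<xi>)))"
    and \<xi>s: "\<And>k. \<xi>s k \<in> D" "\<xi>s \<longlonglongrightarrow> \<xi>"
    and zs: "\<And>k. zs k \<in> sphere 0 1" "zs \<longlonglongrightarrow> z"
    and ys: "\<And>k. ys k \<in> \<Gamma> (\<xi>s k) (zs k)" "ys \<longlonglongrightarrow> 0"
  shows "eventually (\<lambda>k. \<exists>h\<in>\<Gamma> \<xi> (zs k). norm (ys k - h) \<le> c * norm (\<xi>s k - \<xi>)) sequentially"
proof -
  obtain \<epsilon> \<delta> where "\<epsilon> > 0" "\<delta> > 0" and close: "\<forall>\<xi>' z'. \<xi>' \<in> D \<and> z' \<in> sphere 0 1 \<and>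
      dist (\<xi>', z') (\<xi>, z) \<le> \<epsilon> \<longrightarrow> \<Gamma> \<xi>' z' \<inter> cball 0 \<delta> \<subseteq> (\<Union>h\<in>\<Gamma> \<xi> z'. cball h (c * norm (\<xi>' - \<xi>)))"
    using stable by auto
  show ?thesis
    using tendstoD[OF tendsto_Pair[OF \<xi>s(2) zs(2)] \<open>\<epsilon> > 0\<close>] tendstoD[OF ys(2) \<open>\<delta> > 0\<close>]
  proof eventually_elim
    case (elim k)
    then have "ys k \<in> \<Gamma> (\<xi>s k) (zs k) \<inter> cball 0 \<delta>"
      using ys(1) by (simp add: dist_commute)
    then have "ys k \<in> (\<Union>h\<in>\<Gamma> \<xi> (zs k). cball h (c * norm (\<xi>s k - \<xi>)))"
      using close \<xi>s(1) zs(1) elim(1) by (meson less_imp_le subsetD)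
    then show ?case
      by (auto simp: dist_norm norm_minus_commute)
  qed
qed

lemma limit_singular_direction_bound:
  assumes hom: "pos_homogeneous (\<Gamma> \<xi>)"
    and osc: "outer_semicontinuous_on D \<Gamma>" and "\<xi> \<in> D"
    and semi: "semidifferentiable_at A \<xi> \<omega>"
    and v: "\<forall>z\<in>singular_directions A \<Gamma> \<xi>. \<exists>\<epsilon>>0. \<exists>\<delta>>0. \<forall>\<xi>' z'.
              \<xi>' \<in> D \<and> z' \<in> sphere 0 1 \<and> dist (\<xi>', z') (\<xi>, z) \<le> \<epsilon> \<longrightarrow>
              \<Gamma> \<xi>' z' \<inter> cball 0 \<delta> \<subseteq> (\<Union>y\<in>\<Gamma> \<xi> z'. cball y (c * norm (\<xi>' - \<xi>)))"
    and vi: "(\<lambda>w. A \<xi> *v w) ` sv_dom (\<Gamma> \<xi>) \<inter> uminus ` range_cone (\<Gamma> \<xi>) \<subseteq> {0}"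
    and \<tau>s: "\<And>k. \<tau>s k > 0" "\<tau>s \<longlonglongrightarrow> 0" and \<omega>s: "\<omega>s \<longlonglongrightarrow> \<omega>"
    and in_D: "\<And>k. \<xi> + \<tau>s k *\<^sub>R \<omega>s k \<in> D"
    and zs: "\<And>k. zs k \<in> sphere 0 1" "zs \<longlonglongrightarrow> z"
    and ys: "\<And>k. ys k \<in> \<Gamma> (\<xi> + \<tau>s k *\<^sub>R \<omega>s k) (zs k)"
    and es: "es \<longlonglongrightarrow> 0"
    and small: "\<And>k. norm (A (\<xi> + \<tau>s k *\<^sub>R \<omega>s k) *v zs k + ys k) \<le> (y + es k) * \<tau>s k"
  shows "z \<in> singular_directions A \<Gamma> \<xi>"
    and "infdist (- (semiderivative A \<xi> \<omega> *v z)) (cone_plus_image (A \<xi>) (\<Gamma> \<xi>)) \<le> y + c * norm \<omega>"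
proof -
  define \<xi>s where "\<xi>s k = \<xi> + \<tau>s k *\<^sub>R \<omega>s k" for k
  define Ns where "Ns k = (1 / \<tau>s k) *\<^sub>R (A (\<xi>s k) - A \<xi>)" for k
  have A_\<xi>s: "A (\<xi>s k) = A \<xi> + \<tau>s k *\<^sub>R Ns k" for k
    using \<tau>s(1)[of k] by (simp add: Ns_def)
  have Ns: "Ns \<longlonglongrightarrow> semiderivative A \<xi> \<omega>"
    unfolding Ns_def \<xi>s_def by (rule semiderivative_sequentially[OF semi \<tau>s \<omega>s])
  have \<xi>s_lim: "\<xi>s \<longlonglongrightarrow> \<xi>"
    unfolding \<xi>s_def using tendsto_add[OF tendsto_const tendsto_scaleR[OF \<tau>s(2) \<omega>s], of \<xi>] by simp
  have in_D': "\<And>k. \<xi>s k \<in> D" and ys': "\<And>k. ys k \<in> \<Gamma> (\<xi>s k) (zs k)"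
    unfolding \<xi>s_def by (fact in_D ys)+
  have small': "\<And>k. norm ((A \<xi> + \<tau>s k *\<^sub>R Ns k) *v zs k + ys k) \<le> (y + es k) * \<tau>s k"
    unfolding A_\<xi>s[symmetric] \<xi>s_def by (fact small)
  have A_lim: "(\<lambda>k. A (\<xi>s k)) \<longlonglongrightarrow> A \<xi>"
    using tendsto_add[OF tendsto_const tendsto_scaleR[OF \<tau>s(2) Ns], of "A \<xi>"] by (simp add: A_\<xi>s)
  have "(\<lambda>k. (y + es k) * \<tau>s k) \<longlonglongrightarrow> 0"
    using tendsto_mult[OF tendsto_add[OF tendsto_const es] \<tau>s(2), of y] by simp
  then have residual_lim: "(\<lambda>k. A (\<xi>s k) *v zs k + ys k) \<longlonglongrightarrow> 0"
    by (rule Lim_null_comparison[OF always_eventually, rotated]) (use small' in \<open>simp add: A_\<xi>s\<close>)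
  have z: "z \<in> singular_directions A \<Gamma> \<xi>" and "ys \<longlonglongrightarrow> 0"
    using limit_of_near_singular_directions[of D \<Gamma> \<xi> A \<xi>s zs z ys,
        OF osc \<open>\<xi> \<in> D\<close> vi in_D' \<xi>s_lim A_lim zs ys' residual_lim]
    by simp_all
  then show "z \<in> singular_directions A \<Gamma> \<xi>"
    by blast
  have close: "eventually (\<lambda>k. \<exists>h\<in>\<Gamma> \<xi> (zs k). norm (ys k - h) \<le> c * norm (\<xi>s k - \<xi>)) sequentially"
    using bspec[OF v z] in_D' \<xi>s_lim zs ys' \<open>ys \<longlonglongrightarrow> 0\<close> by (rule eventually_close_to_base_values)
  have near: "eventually (\<lambda>k. \<exists>h\<in>\<Gamma> \<xi> (zs k). norm (ys k - h) \<le> \<tau>s k * (c * norm (\<omega>s k))) sequentially"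
    using close
  proof (rule eventually_mono)
    fix k
    have "c * norm (\<xi>s k - \<xi>) = \<tau>s k * (c * norm (\<omega>s k))"
      using \<tau>s(1)[of k] by (simp add: \<xi>s_def)
    then show "\<exists>h\<in>\<Gamma> \<xi> (zs k). norm (ys k - h) \<le> c * norm (\<xi>s k - \<xi>) \<Longrightarrow>
               \<exists>h\<in>\<Gamma> \<xi> (zs k). norm (ys k - h) \<le> \<tau>s k * (c * norm (\<omega>s k))"
      by simp
  qed
  have "(\<lambda>k. c * norm (\<omega>s k)) \<longlonglongrightarrow> c * norm \<omega>"
    by (intro tendsto_intros \<omega>s)
  then show "infdist (- (semiderivative A \<xi> \<omega> *v z)) (cone_plus_image (A \<xi>) (\<Gamma> \<xi>)) \<le> y + c * norm \<omega>"
    by (rule infdist_cone_plus_image_limit_le[OF hom \<tau>s(1) zs Ns es _ small' near])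
qed

lemma subderivative_lsv_ge:
  assumes hom: "pos_homogeneous (\<Gamma> \<xi>)"
    and osc: "outer_semicontinuous_on D \<Gamma>" and "\<xi> \<in> D"
    and semi: "semidifferentiable_at A \<xi> \<omega>"
    and v: "\<forall>z\<in>singular_directions A \<Gamma> \<xi>. \<exists>\<epsilon>>0. \<exists>\<delta>>0. \<forall>\<xi>' z'.
              \<xi>' \<in> D \<and> z' \<in> sphere 0 1 \<and> dist (\<xi>', z') (\<xi>, z) \<le> \<epsilon> \<longrightarrow>
              \<Gamma> \<xi>' z' \<inter> cball 0 \<delta> \<subseteq> (\<Union>y\<in>\<Gamma> \<xi> z'. cball y (c * norm (\<xi>' - \<xi>)))"
    and vi: "(\<lambda>w. A \<xi> *v w) ` sv_dom (\<Gamma> \<xi>) \<inter> uminus ` range_cone (\<Gamma> \<xi>) \<subseteq> {0}"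
    and z0: "z0 \<in> singular_directions A \<Gamma> \<xi>"
    and lower: "\<And>z. z \<in> singular_directions A \<Gamma> \<xi> \<Longrightarrow>
                  b \<le> infdist (- (semiderivative A \<xi> \<omega> *v z)) (cone_plus_image (A \<xi>) (\<Gamma> \<xi>))"
  shows "ereal (b - c * norm \<omega>) \<le> subderivative (lsv D (Xi_map A \<Gamma>)) \<xi> \<omega>"
proof (rule subderivative_ge_sequentially)
  fix \<tau>s \<omega>s y
  assume \<tau>s: "\<And>k. \<tau>s k > 0" "\<tau>s \<longlonglongrightarrow> 0" and \<omega>s: "\<omega>s \<longlonglongrightarrow> \<omega>"
    and quotient: "\<And>k. (lsv D (Xi_map A \<Gamma>) (\<xi> + \<tau>s k *\<^sub>R \<omega>s k) - lsv D (Xi_map A \<Gamma>) \<xi>)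
                         / ereal (\<tau>s k) \<le> ereal y"
  define \<xi>s where "\<xi>s k = \<xi> + \<tau>s k *\<^sub>R \<omega>s k" for k
  have lsv_\<xi>: "lsv D (Xi_map A \<Gamma>) \<xi> = 0"
    using z0 \<open>\<xi> \<in> D\<close> by (intro lsv_eq_0I[of \<xi> D z0]) (auto simp: singular_directions_def)
  \<comment> \<open>The slack 1/(k+1) turns the bound on the infimum defining lsv into one attained by some z.\<close>
  have "\<exists>z y'. \<xi>s k \<in> D \<and> z \<in> sphere 0 1 \<and> y' \<in> \<Gamma> (\<xi>s k) z \<and>
          norm (A (\<xi>s k) *v z + y') \<le> (y + 1 / Suc k) * \<tau>s k" for k
  proof -
    have "lsv D (Xi_map A \<Gamma>) (\<xi>s k) \<le> ereal (\<tau>s k * y)"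
      using quotient[of k] \<tau>s(1)[of k] by (simp add: lsv_\<xi> \<xi>s_def ereal_divide_le_pos)
    also have "\<dots> < ereal ((y + 1 / Suc k) * \<tau>s k)"
      using \<tau>s(1)[of k] by (simp add: algebra_simps)
    finally obtain z p where "\<xi>s k \<in> D" "z \<in> sphere 0 1" "p \<in> Xi_map A \<Gamma> (\<xi>s k) z"
        "norm p < (y + 1 / Suc k) * \<tau>s k"
      by (rule lsv_lessE)
    then show ?thesis
      unfolding Xi_map_def by force
  qed
  then obtain zs ys where in_D: "\<And>k. \<xi>s k \<in> D" and zs: "\<And>k. zs k \<in> sphere 0 1"
    and ys: "\<And>k. ys k \<in> \<Gamma> (\<xi>s k) (zs k)"
    and small: "\<And>k. norm (A (\<xi>s k) *v zs k + ys k) \<le> (y + 1 / Suc k) * \<tau>s k"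
    by metis
  obtain r z where r: "strict_mono r" and zs_r: "(zs \<circ> r) \<longlonglongrightarrow> z"
    using compact_imp_seq_compact[OF compact_sphere] zs by (metis seq_compactE)
  have "z \<in> singular_directions A \<Gamma> \<xi>"
    and "infdist (- (semiderivative A \<xi> \<omega> *v z)) (cone_plus_image (A \<xi>) (\<Gamma> \<xi>)) \<le> y + c * norm \<omega>"
    using limit_singular_direction_bound[OF hom osc \<open>\<xi> \<in> D\<close> semi v vi,
        of "\<tau>s \<circ> r" "\<omega>s \<circ> r" "zs \<circ> r" z "ys \<circ> r" "(\<lambda>k. 1 / Suc k) \<circ> r" y]
      \<tau>s(1) LIMSEQ_subseq_LIMSEQ[OF \<tau>s(2) r] LIMSEQ_subseq_LIMSEQ[OF \<omega>s r] zs zs_r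
      LIMSEQ_subseq_LIMSEQ[OF LIMSEQ_Suc[OF lim_inverse_n'] r] in_D ys small
    by (simp_all add: \<xi>s_def)
  then show "b - c * norm \<omega> \<le> y"
    using lower by fastforce
qed

lemma subderivative_lsv_bound_at_minimiser:
  assumes hom: "pos_homogeneous (\<Gamma> \<xi>)" and "\<xi> \<in> D"
    and singular: "singular_point D (Xi_map A \<Gamma>) \<xi>"
    and osc: "outer_semicontinuous_on D \<Gamma>"
    and semi: "semidifferentiable_at A \<xi> \<omega>"
    and v: "\<forall>z\<in>singular_directions A \<Gamma> \<xi>. \<exists>\<epsilon>>0. \<exists>\<delta>>0. \<forall>\<xi>' z'.
              \<xi>' \<in> D \<and> z' \<in> sphere 0 1 \<and> dist (\<xi>', z') (\<xi>, z) \<le> \<epsilon> \<longrightarrow>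
              \<Gamma> \<xi>' z' \<inter> cball 0 \<delta> \<subseteq> (\<Union>y\<in>\<Gamma> \<xi> z'. cball y (c * norm (\<xi>' - \<xi>)))"
    and vi: "(\<lambda>w. A \<xi> *v w) ` sv_dom (\<Gamma> \<xi>) \<inter> uminus ` range_cone (\<Gamma> \<xi>) \<subseteq> {0}"
  obtains z0 where "z0 \<in> singular_directions A \<Gamma> \<xi>"
    and "\<And>z. z \<in> singular_directions A \<Gamma> \<xi> \<Longrightarrow>
           infdist (- (semiderivative A \<xi> \<omega> *v z0)) (cone_plus_image (A \<xi>) (\<Gamma> \<xi>))
           \<le> infdist (- (semiderivative A \<xi> \<omega> *v z)) (cone_plus_image (A \<xi>) (\<Gamma> \<xi>))"
    and "ereal (infdist (- (semiderivative A \<xi> \<omega> *v z0)) (cone_plus_image (A \<xi>) (\<Gamma> \<xi>)))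
           \<le> subderivative (lsv D (Xi_map A \<Gamma>)) \<xi> \<omega> + ereal (c * norm \<omega>)"
proof -
  let ?Z0 = "singular_directions A \<Gamma> \<xi>"
  define g where "g z = infdist (- (semiderivative A \<xi> \<omega> *v z)) (cone_plus_image (A \<xi>) (\<Gamma> \<xi>))" for z
  have "?Z0 \<noteq> {}"
    by (rule singular_directions_nonempty[OF hom singular])
  moreover have "continuous_on ?Z0 g"
    unfolding g_def by (intro continuous_intros)
  ultimately obtain z0 where z0: "z0 \<in> ?Z0" and z0_min: "\<And>z. z \<in> ?Z0 \<Longrightarrow> g z0 \<le> g z"
    using continuous_attains_inf[OF compact_singular_directions[OF osc \<open>\<xi> \<in> D\<close>]] by blast
  have "ereal (g z0 - c * norm \<omega>) \<le> subderivative (lsv D (Xi_map A \<Gamma>)) \<xi> \<omega>"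
    using z0_min unfolding g_def by (rule subderivative_lsv_ge[OF hom osc \<open>\<xi> \<in> D\<close> semi v vi z0])
  then have "ereal (g z0) \<le> subderivative (lsv D (Xi_map A \<Gamma>)) \<xi> \<omega> + ereal (c * norm \<omega>)"
    by (cases "subderivative (lsv D (Xi_map A \<Gamma>)) \<xi> \<omega>") auto
  with z0 z0_min that show ?thesis
    unfolding g_def by blast
qed

theorem theorem2:
  fixes U D :: "((real^'n) \<times> (real^'p)) set"
    and \<Gamma> :: "(real^'n) \<times> (real^'p) \<Rightarrow> real^'m \<Rightarrow> (real^'q) set"
    and A :: "(real^'n) \<times> (real^'p) \<Rightarrow> real^'m^'q"
    and \<xi>bar \<omega> :: "(real^'n) \<times> (real^'p)"
    and c :: real
  assumes U_open: "open U"
    and D_sub: "D \<subseteq> U" and D_ne: "D \<noteq> {}"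
    and hom: "\<forall>\<xi>\<in>D. pos_homogeneous (\<Gamma> \<xi>)"
    and xibar: "\<xi>bar \<in> D"
    and i: "singular_point D (Xi_map A \<Gamma>) \<xi>bar"
    and ii: "outer_semicontinuous_on D \<Gamma>"
    and iii: "semidifferentiable_at A \<xi>bar \<omega>"
    and iv: "closed ((\<lambda>w. A \<xi>bar *v w) ` sv_dom (\<Gamma> \<xi>bar))"
    and c_nonneg: "c \<ge> 0"
    and v: "\<forall>z\<in>{z \<in> sphere 0 1 \<inter> sv_dom (\<Gamma> \<xi>bar). 0 \<in> Xi_map A \<Gamma> \<xi>bar z}.
              \<exists>\<epsilon>>0. \<exists>\<delta>>0. \<forall>\<xi> z'. \<xi> \<in> D \<and> z' \<in> sphere 0 1 \<and> dist (\<xi>, z') (\<xi>bar, z) \<le> \<epsilon> \<longrightarrow>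
                 \<Gamma> \<xi> z' \<inter> cball 0 \<delta> \<subseteq> (\<Union>y\<in>\<Gamma> \<xi>bar z'. cball y (c * norm (\<xi> - \<xi>bar)))"
    and vi: "(\<lambda>w. A \<xi>bar *v w) ` sv_dom (\<Gamma> \<xi>bar)
               \<inter> uminus ` closure (cone_of (\<Union>z\<in>sphere 0 1 \<inter> sv_dom (\<Gamma> \<xi>bar). \<Gamma> \<xi>bar z)) \<subseteq> {0}"
  shows "\<exists>z0\<in>{z \<in> sphere 0 1 \<inter> sv_dom (\<Gamma> \<xi>bar). 0 \<in> Xi_map A \<Gamma> \<xi>bar z}.
           (\<forall>z\<in>{z \<in> sphere 0 1 \<inter> sv_dom (\<Gamma> \<xi>bar). 0 \<in> Xi_map A \<Gamma> \<xi>bar z}.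
              set_dist 0 {semiderivative A \<xi>bar \<omega> *v z0 + t + A \<xi>bar *v w | t w.
                   t \<in> closure (cone_of (\<Union>z\<in>sphere 0 1 \<inter> sv_dom (\<Gamma> \<xi>bar). \<Gamma> \<xi>bar z)) \<and> w \<in> sv_dom (\<Gamma> \<xi>bar)}
              \<le> set_dist 0 {semiderivative A \<xi>bar \<omega> *v z + t + A \<xi>bar *v w | t w.
                   t \<in> closure (cone_of (\<Union>z\<in>sphere 0 1 \<inter> sv_dom (\<Gamma> \<xi>bar). \<Gamma> \<xi>bar z)) \<and> w \<in> sv_dom (\<Gamma> \<xi>bar)})
         \<and> subderivative (lsv D (Xi_map A \<Gamma>)) \<xi>bar \<omega> + ereal (c * norm \<omega>)
             \<ge> set_dist 0 {semiderivative A \<xi>bar \<omega> *v z0 + t + A \<xi>bar *v w | t w.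
                   t \<in> closure (cone_of (\<Union>z\<in>sphere 0 1 \<inter> sv_dom (\<Gamma> \<xi>bar). \<Gamma> \<xi>bar z)) \<and> w \<in> sv_dom (\<Gamma> \<xi>bar)}"
proof -
  let ?L = "semiderivative A \<xi>bar \<omega>" and ?T = "cone_plus_image (A \<xi>bar) (\<Gamma> \<xi>bar)"
  have hom_bar: "pos_homogeneous (\<Gamma> \<xi>bar)"
    using hom xibar by blast
  have v': "\<forall>z\<in>singular_directions A \<Gamma> \<xi>bar. \<exists>\<epsilon>>0. \<exists>\<delta>>0. \<forall>\<xi> z'.
              \<xi> \<in> D \<and> z' \<in> sphere 0 1 \<and> dist (\<xi>, z') (\<xi>bar, z) \<le> \<epsilon> \<longrightarrow>
              \<Gamma> \<xi> z' \<inter> cball 0 \<delta> \<subseteq> (\<Union>y\<in>\<Gamma> \<xi>bar z'. cball y (c * norm (\<xi> - \<xi>bar)))"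
    using v unfolding singular_directions_def .
  have vi': "(\<lambda>w. A \<xi>bar *v w) ` sv_dom (\<Gamma> \<xi>bar) \<inter> uminus ` range_cone (\<Gamma> \<xi>bar) \<subseteq> {0}"
    using vi unfolding range_cone_def .
  obtain z0 where z0: "z0 \<in> singular_directions A \<Gamma> \<xi>bar"
    and z0_min: "\<And>z. z \<in> singular_directions A \<Gamma> \<xi>bar \<Longrightarrow> infdist (- (?L *v z0)) ?T \<le> infdist (- (?L *v z)) ?T"
    and bound: "ereal (infdist (- (?L *v z0)) ?T) \<le> subderivative (lsv D (Xi_map A \<Gamma>)) \<xi>bar \<omega> + ereal (c * norm \<omega>)"
    using subderivative_lsv_bound_at_minimiser[OF hom_bar xibar i ii iii v' vi'] by blast
  have "?T \<noteq> {}"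
    using z0 by (intro cone_plus_image_nonempty[of z0]) (auto simp: singular_directions_def sv_dom_def)
  then have set_dist_eq: "\<And>z. set_dist 0 {?L *v z + t + A \<xi>bar *v w | t w.
                t \<in> closure (cone_of (\<Union>z\<in>sphere 0 1 \<inter> sv_dom (\<Gamma> \<xi>bar). \<Gamma> \<xi>bar z))
                \<and> w \<in> sv_dom (\<Gamma> \<xi>bar)} = ereal (infdist (- (?L *v z)) ?T)"
    unfolding range_cone_def[symmetric] by (rule set_dist_translated_cone_plus_image)
  show ?thesis
    unfolding set_dist_eq
  proof (intro bexI conjI ballI)
    show "z0 \<in> {z \<in> sphere 0 1 \<inter> sv_dom (\<Gamma> \<xi>bar). 0 \<in> Xi_map A \<Gamma> \<xi>bar z}"
      using z0 unfolding singular_directions_def .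
  qed (use z0_min bound in \<open>simp_all add: singular_directions_def\<close>)
qed

end
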